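(* Let $p\ge1$ and $q\le k$ be reals such that $\frac kp+\frac{pq}2\le k$. For any set family $\mathcal S\subseteq2^{[k]}$ such that $|S|\ge\frac kp+\frac{pq}2$ for every $S\in\mathcal S$ and $|S\cap S'|\le q$ for any two distinct $S,S'\in\mathcal S$, it holds that $|\mathcal S|\le p$.
   Context: $[k]=\{1,\dots,k\}$ and $2^{[k]}$ is its power set. *)

theory Defs
  imports Main Complex_Main
begin

end

theory Submission
  imports Defs
begin

text \<open>
  Choose \<open>n = \<lfloor>p\<rfloor> + 1\<close> members of the family. By inclusion-exclusion truncated after the
  pairwise terms, their union has at least \<open>n (k/p + pq/2) - n(n-1)q/2 = nk/p + nq(p+1-n)/2\<close>
  elements, and since \<open>p < n \<le> p + 1\<close> and \<open>q \<ge> 0\<close> this exceeds \<open>k\<close>.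
\<close>

lemma card_Union_ge_sum_card_minus_pairwise:
  fixes q :: real
  assumes "finite F" "\<forall>A\<in>F. finite A"
    and "pairwise (\<lambda>A B. real (card (A \<inter> B)) \<le> q) F"
  shows "(\<Sum>A\<in>F. real (card A)) - real (card F) * (real (card F) - 1) / 2 * q
           \<le> real (card (\<Union>F))"
  using assms
proof (induction F rule: finite_induct)
  case empty
  then show ?case by simp
next
  case (insert B F)
  let ?c = "real (card F)"
  have fin: "finite B" "finite (\<Union>F)"
    using insert by auto
  have "card (B \<inter> \<Union>F) \<le> (\<Sum>A\<in>F. card (B \<inter> A))"
    unfolding Int_Union by (rule card_UN_le[OF insert.hyps(1)])
  then have "real (card (B \<inter> \<Union>F)) \<le> (\<Sum>A\<in>F. real (card (B \<inter> A)))"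
    unfolding of_nat_sum[symmetric] by (rule of_nat_mono)
  also have "\<dots> \<le> (\<Sum>A\<in>F. q)"
  proof (rule sum_mono)
    fix A assume "A \<in> F"
    with insert.hyps(2) have "B \<noteq> A" by blast
    with \<open>A \<in> F\<close> insert.prems(2) show "real (card (B \<inter> A)) \<le> q"
      unfolding pairwise_def by blast
  qed
  finally have inter: "real (card (B \<inter> \<Union>F)) \<le> ?c * q"
    by simp
  have union: "real (card (B \<union> \<Union>F)) = real (card B) + real (card (\<Union>F)) - real (card (B \<inter> \<Union>F))"
    using card_Un_Int[OF fin] by simp
  have IH: "(\<Sum>A\<in>F. real (card A)) - ?c * (?c - 1) / 2 * q \<le> real (card (\<Union>F))"
    using insert.IH insert.prems pairwise_subset[of _ "insert B F" F] by blast
  have "(\<Sum>A\<in>insert B F. real (card A))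
          - real (card (insert B F)) * (real (card (insert B F)) - 1) / 2 * q
        = real (card B) + ((\<Sum>A\<in>F. real (card A)) - ?c * (?c - 1) / 2 * q) - ?c * q"
    using insert.hyps by (simp add: field_simps)
  also have "\<dots> \<le> real (card B) + real (card (\<Union>F)) - real (card (B \<inter> \<Union>F))"
    using IH inter by linarith
  also have "\<dots> = real (card (\<Union>(insert B F)))"
    using union by simp
  finally show ?case .
qed

lemma too_many_sets_overflow:
  fixes k n p q :: real
  assumes "p \<ge> 1" "q \<ge> 0" "k > 0" "p < n" "n \<le> p + 1"
  shows "k < n * (k / p + p * q / 2) - n * (n - 1) / 2 * q"
proof -
  have "k * p < n * k"
    using assms by simp
  then have "k < n * k / p"
    using assms by (simp add: pos_less_divide_eq)
  also have "\<dots> \<le> n * k / p + n * q * (p + 1 - n) / 2"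
    using assms by (simp add: mult_nonneg_nonneg)
  also have "\<dots> = n * (k / p + p * q / 2) - n * (n - 1) / 2 * q"
    by (simp add: algebra_simps add_divide_distrib diff_divide_distrib)
  finally show ?thesis .
qed

lemma card_Union_gt_of_pairwise_card_Int_le:
  fixes G :: "'a set set" and k p q :: real
  assumes "finite G" "\<forall>S\<in>G. finite S" "p \<ge> 1" "q \<ge> 0" "k > 0"
    and "p < real (card G)" "real (card G) \<le> p + 1"
    and large: "\<forall>S\<in>G. k / p + p * q / 2 \<le> real (card S)"
    and small_Int: "pairwise (\<lambda>S S'. real (card (S \<inter> S')) \<le> q) G"
  shows "k < real (card (\<Union>G))"
proof -
  let ?n = "real (card G)"
  have "k < ?n * (k / p + p * q / 2) - ?n * (?n - 1) / 2 * q"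
    using too_many_sets_overflow assms(3-7) .
  also have "\<dots> \<le> (\<Sum>S\<in>G. real (card S)) - ?n * (?n - 1) / 2 * q"
    using large sum_mono[of G "\<lambda>_. k / p + p * q / 2" "\<lambda>S. real (card S)"] by simp
  also have "\<dots> \<le> real (card (\<Union>G))"
    using card_Union_ge_sum_card_minus_pairwise assms(1,2) small_Int .
  finally show ?thesis .
qed

lemma card_family_le_of_pairwise_card_Int_le:
  fixes U :: "'a set" and \<F> :: "'a set set" and p q :: real
  assumes "finite U" "\<F> \<subseteq> Pow U" "p \<ge> 1"
    and large: "\<forall>S\<in>\<F>. real (card U) / p + p * q / 2 \<le> real (card S)"
    and small_Int: "pairwise (\<lambda>S S'. real (card (S \<inter> S')) \<le> q) \<F>"
  shows "real (card \<F>) \<le> p"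
proof (rule ccontr)
  assume "\<not> real (card \<F>) \<le> p"
  then have many: "p < real (card \<F>)" by simp
  have fin: "finite \<F>" "\<forall>S\<in>\<F>. finite S"
    using assms(1,2) finite_subset[OF assms(2)] by (auto intro: finite_subset)
  have "\<not> card \<F> \<le> Suc 0"
    using many \<open>p \<ge> 1\<close> by linarith
  then obtain S S' where "S \<in> \<F>" "S' \<in> \<F>" "S \<noteq> S'"
    using card_le_Suc0_iff_eq[OF fin(1)] by blast
  then have "q \<ge> 0"
    using small_Int by (auto simp: pairwise_def intro: order_trans[OF of_nat_0_le_iff])
  have "U \<noteq> {}"
  proof
    assume "U = {}"
    then have "card \<F> \<le> 1"
      using assms(2) card_mono[of "{{}}" \<F>] by auto
    with many \<open>p \<ge> 1\<close> show False by simp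
  qed
  have "nat \<lfloor>p\<rfloor> + 1 \<le> card \<F>"
    using many \<open>p \<ge> 1\<close> by (simp add: floor_less_iff) linarith
  then obtain G where G: "G \<subseteq> \<F>" "card G = nat \<lfloor>p\<rfloor> + 1"
    using obtain_subset_with_card_n by metis
  have "real (card U) < real (card (\<Union>G))"
  proof (rule card_Union_gt_of_pairwise_card_Int_le)
    show "finite G" "\<forall>S\<in>G. finite S"
      using G(1) fin by (auto intro: finite_subset)
    show "p < real (card G)" "real (card G) \<le> p + 1"
      using G(2) \<open>p \<ge> 1\<close> by linarith+
  qed (use G(1) assms(1) \<open>p \<ge> 1\<close> \<open>q \<ge> 0\<close> \<open>U \<noteq> {}\<close> large pairwise_subset[OF small_Int]
       in \<open>auto simp: card_gt_0_iff\<close>)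
  moreover have "card (\<Union>G) \<le> card U"
    using G(1) assms(1,2) by (intro card_mono) auto
  ultimately show False
    by simp
qed

theorem lemma3p8:
  fixes k :: nat and p q :: real and \<S> :: "nat set set"
  assumes "p \<ge> 1" and "q \<le> real k"
    and "real k / p + p * q / 2 \<le> real k"
    and "\<S> \<subseteq> Pow {1..k}"
    and "\<forall>S\<in>\<S>. real (card S) \<ge> real k / p + p * q / 2"
    and "\<forall>S\<in>\<S>. \<forall>S'\<in>\<S>. S \<noteq> S' \<longrightarrow> real (card (S \<inter> S')) \<le> q"
  shows "real (card \<S>) \<le> p"
  using card_family_le_of_pairwise_card_Int_le[of "{1..k}" \<S> p q] assms(1,4-6)
  by (simp add: pairwise_def)

end
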